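(* Let $b\geq 2$ be fixed. For all sufficiently large $N$, \[ \frac{N^2}{16b^2}\leq\mathcal{S}_{1,2}(N)\leq\frac{N^2}{2}\qquad\text{and}\qquad \frac{N^2}{8b}\leq\mathcal{S}_{2,1}(N)\leq\frac{N^2}{2}. \] In particular $\mathcal{S}_{1,2}(N),\mathcal{S}_{2,1}(N)\asymp_b N^2$.
   Context: For a positive integer $n$ with $L$ digits in base $b$, $n=\sum_{0\leq i<L}\varepsilon_i(n)b^i$ ($\varepsilon_i(n)\in\{0,\dots,b-1\}$, $\varepsilon_{L-1}(n)\neq0$), its digital reverse is $\overleftarrow{n}=\sum_{0\leq i<L}\varepsilon_i(n)b^{L-1-i}$. For a positive integer $N$, \[ \mathcal{S}_{1,2}(N)=\sum_{\substack{n_1,n_2,n_3\leq N\\ n_1+n_2+n_3=N\\ (\overleftarrow{n_2}\,\overleftarrow{n_3},b)=1}}1,\qquad \mathcal{S}_{2,1}(N)=\sum_{\substack{n_1,n_2,n_3\leq N\\ n_1+n_2+n_3=N\\ (\overleftarrow{n_3},b)=1}}1, \] sums over positive integers $n_1,n_2,n_3$; $(\cdot,\cdot)$ is gcd. *)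

theory Defs
  imports "HOL-Analysis.Analysis"
begin

fun ndigits :: "nat \<Rightarrow> nat \<Rightarrow> nat" where
  "ndigits b n = (if n = 0 \<or> b < 2 then 0 else Suc (ndigits b (n div b)))"

declare ndigits.simps[simp del]

definition digit :: "nat \<Rightarrow> nat \<Rightarrow> nat \<Rightarrow> nat" where
  "digit b n i = n div b ^ i mod b"

definition digrev :: "nat \<Rightarrow> nat \<Rightarrow> nat" where
  "digrev b n = (\<Sum>i<ndigits b n. digit b n i * b ^ (ndigits b n - 1 - i))"

definition S12 :: "nat \<Rightarrow> nat \<Rightarrow> nat" where
  "S12 b N = card {(n1, n2, n3). 1 \<le> n1 \<and> 1 \<le> n2 \<and> 1 \<le> n3 \<and>
      n1 \<le> N \<and> n2 \<le> N \<and> n3 \<le> N \<and> n1 + n2 + n3 = N \<and>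
      coprime (digrev b n2 * digrev b n3) b}"

definition S21 :: "nat \<Rightarrow> nat \<Rightarrow> nat" where
  "S21 b N = card {(n1, n2, n3). 1 \<le> n1 \<and> 1 \<le> n2 \<and> 1 \<le> n3 \<and>
      n1 \<le> N \<and> n2 \<le> N \<and> n3 \<le> N \<and> n1 + n2 + n3 = N \<and>
      coprime (digrev b n3) b}"

end

theory Submission
  imports Defs
begin

text \<open>A triple is determined by its last two entries \<open>(n\<^sub>2, n\<^sub>3)\<close>, which range over
  pairs of positive integers with \<open>n\<^sub>2 + n\<^sub>3 < N\<close>; there are fewer than \<open>N\<^sup>2/2\<close> of them.
  For the lower bounds, a number \<open>n\<close> with \<open>b\<^sup>k \<le> n < 2b\<^sup>k\<close> has leading digit \<open>1\<close>, so its
  reverse ends in the digit \<open>1\<close> and is coprime to \<open>b\<close>. Choose \<open>k\<close> with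
  \<open>4b\<^sup>k \<le> N < 4b\<^sup>k\<^sup>+\<^sup>1\<close>. Letting \<open>n\<^sub>2, n\<^sub>3\<close> both range over \<open>[b\<^sup>k, 2b\<^sup>k)\<close> gives
  \<open>b\<^sup>2\<^sup>k > N\<^sup>2/(16b\<^sup>2)\<close> admissible triples for \<open>S\<^sub>1\<^sub>,\<^sub>2\<close>; letting \<open>n\<^sub>3\<close> range over
  \<open>[b\<^sup>k, 2b\<^sup>k)\<close> and \<open>n\<^sub>2\<close> over \<open>[1, N - 2b\<^sup>k]\<close> gives \<open>(N - 2b\<^sup>k) b\<^sup>k \<ge> N\<^sup>2/(8b)\<close>
  admissible triples for \<open>S\<^sub>2\<^sub>,\<^sub>1\<close>.\<close>

lemma ndigits_0 [simp]: "ndigits b 0 = 0"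
  by (subst ndigits.simps) simp

lemma ndigits_div_base:
  assumes "b \<ge> 2" "n \<noteq> 0"
  shows "ndigits b n = Suc (ndigits b (n div b))"
  using assms by (subst ndigits.simps) simp

lemma ndigits_eq_Suc:
  assumes "b \<ge> 2" "b ^ k \<le> n" "n < b ^ Suc k"
  shows "ndigits b n = Suc k"
  using assms(2,3)
proof (induction k arbitrary: n)
  case 0
  then show ?case
    using ndigits_div_base[OF assms(1)] by simp
next
  case (Suc k)
  have "b ^ k \<le> n div b" "n div b < b ^ Suc k"
    using Suc.prems assms(1)
    by (simp_all add: less_eq_div_iff_mult_less_eq div_less_iff_less_mult mult.commute)
  then have "ndigits b (n div b) = Suc k"
    by (rule Suc.IH)
  moreover have "n \<noteq> 0"
    using Suc.prems(1) assms(1) by (metis le_zero_eq power_not_zero not_numeral_le_zero)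
  ultimately show ?case
    using ndigits_div_base[OF assms(1)] by simp
qed

lemma digrev_mod_base:
  assumes "b \<ge> 2" "ndigits b n = Suc k"
  shows "digrev b n mod b = digit b n k"
proof -
  have "digrev b n = (\<Sum>i<k. digit b n i * b ^ (k - i)) + digit b n k"
    unfolding digrev_def assms(2) by simp
  moreover have "b dvd (\<Sum>i<k. digit b n i * b ^ (k - i))"
    by (intro dvd_sum) simp
  ultimately show ?thesis
    using assms(1) by (auto simp: digit_def)
qed

lemma coprime_digrev_if_leading_digit_one:
  assumes "b \<ge> 2" "b ^ k \<le> n" "n < 2 * b ^ k"
  shows "coprime (digrev b n) b"
proof -
  have "2 * b ^ k \<le> b ^ Suc k"
    using assms(1) by simp
  with assms(3) have "n < b ^ Suc k"
    by (rule less_le_trans)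
  with assms have "ndigits b n = Suc k"
    by (intro ndigits_eq_Suc)
  with assms(1) have "digrev b n mod b = digit b n k"
    by (rule digrev_mod_base)
  moreover have "n div b ^ k = 1"
    using assms(2,3) by (intro div_nat_eqI) auto
  ultimately have "digrev b n mod b = 1"
    using assms(1) by (simp add: digit_def)
  then show ?thesis
    using assms(1) by (metis coprime_1_left coprime_mod_left_iff not_numeral_le_zero)
qed

definition pairs_below :: "nat \<Rightarrow> (nat \<Rightarrow> nat \<Rightarrow> bool) \<Rightarrow> (nat \<times> nat) set" where
  "pairs_below N P = {(a, c). 1 \<le> a \<and> 1 \<le> c \<and> a + c < N \<and> P a c}"

lemma finite_pairs_below: "finite (pairs_below N P)"
  by (rule finite_subset[of _ "{..<N} \<times> {..<N}"]) (auto simp: pairs_below_def)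

lemma card_triples_eq_card_pairs_below:
  "card {(n1, n2, n3). 1 \<le> n1 \<and> 1 \<le> n2 \<and> 1 \<le> n3 \<and>
      n1 \<le> N \<and> n2 \<le> N \<and> n3 \<le> N \<and> n1 + n2 + n3 = N \<and> P n2 n3} = card (pairs_below N P)"
  (is "card ?T = _")
proof -
  have "inj_on snd ?T"
    by (auto simp: inj_on_def)
  moreover have "snd ` ?T = pairs_below N P"
  proof (intro equalityI subsetI)
    fix p
    assume "p \<in> pairs_below N P"
    then obtain a c where "p = (a, c)" "1 \<le> a" "1 \<le> c" "a + c < N" "P a c"
      by (auto simp: pairs_below_def)
    then show "p \<in> snd ` ?T"
      by (intro rev_image_eqI[of "(N - a - c, a, c)"]) auto
  qed (auto simp: pairs_below_def)
  ultimately show ?thesis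
    using card_image by fastforce
qed

lemma card_pairs_below_le: "2 * card (pairs_below N P) \<le> N ^ 2"
proof -
  let ?A = "pairs_below N (\<lambda>_ _. True)"
  let ?reflect = "\<lambda>(a, c). (N - a, N - c)"
  have "card (pairs_below N P) \<le> card ?A"
    by (intro card_mono finite_pairs_below) (auto simp: pairs_below_def)
  moreover have "card (?reflect ` ?A) = card ?A"
    by (intro card_image) (auto simp: inj_on_def pairs_below_def)
  moreover have "card (?A \<union> ?reflect ` ?A) = card ?A + card (?reflect ` ?A)"
    by (intro card_Un_disjoint finite_pairs_below finite_imageI) (auto simp: pairs_below_def)
  moreover have "card (?A \<union> ?reflect ` ?A) \<le> card ({..<N} \<times> {..<N})"
    by (intro card_mono) (auto simp: pairs_below_def)
  ultimately show ?thesis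
    by (simp add: card_cartesian_product power2_eq_square)
qed

lemma card_le_card_pairs_below:
  assumes "A \<times> C \<subseteq> pairs_below N P"
  shows "card A * card C \<le> card (pairs_below N P)"
  using card_mono[OF finite_pairs_below assms] by (simp add: card_cartesian_product)

lemma ex_power_window:
  fixes b c N :: nat
  assumes "b \<ge> 2" "0 < c" "c \<le> N"
  shows "\<exists>k. c * b ^ k \<le> N \<and> N < c * b ^ Suc k"
  using assms(3)
proof (induction N rule: dec_induct)
  case base
  then show ?case
    using assms(1,2) by (intro exI[of _ 0]) auto
next
  case (step n)
  then obtain k where k: "c * b ^ k \<le> n" "n < c * b ^ Suc k"
    by blast
  show ?case
  proof (cases "Suc n < c * b ^ Suc k")
    case True
    then show ?thesis
      using k by (intro exI[of _ k]) auto
  next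
    case False
    then have "Suc n = c * b ^ Suc k"
      using k by simp
    moreover have "b ^ Suc k < b ^ Suc (Suc k)"
      using assms(1) by simp
    ultimately show ?thesis
      using assms(2) by (intro exI[of _ "Suc k"]) auto
  qed
qed

lemma S12_eq_card_pairs_below:
  "S12 b N = card (pairs_below N (\<lambda>a c. coprime (digrev b a * digrev b c) b))"
  unfolding S12_def by (rule card_triples_eq_card_pairs_below)

lemma S21_eq_card_pairs_below:
  "S21 b N = card (pairs_below N (\<lambda>a c. coprime (digrev b c) b))"
  unfolding S21_def by (rule card_triples_eq_card_pairs_below)

lemma square_le_mult_S12:
  assumes "b \<ge> 2" "4 * b ^ k \<le> N" "N < 4 * b ^ Suc k"
  shows "N ^ 2 \<le> 16 * b ^ 2 * S12 b N"
proof -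
  define B where "B = b ^ k"
  have window: "coprime (digrev b n) b" if "B \<le> n" "n < 2 * B" for n
    using coprime_digrev_if_leading_digit_one[OF assms(1)] that unfolding B_def .
  have "4 * B \<le> N" "1 \<le> B"
    using assms(1,2) by (simp_all add: B_def)
  then have "{B..<2 * B} \<times> {B..<2 * B} \<subseteq> pairs_below N (\<lambda>a c. coprime (digrev b a * digrev b c) b)"
    by (auto simp: pairs_below_def window)
  from card_le_card_pairs_below[OF this] have "B * B \<le> S12 b N"
    by (simp add: S12_eq_card_pairs_below)
  have "N ^ 2 \<le> (4 * b * B) ^ 2"
    using assms(3) by (intro power_mono) (simp_all add: B_def mult_ac)
  also have "\<dots> = 16 * b ^ 2 * (B * B)"
    by (simp add: power2_eq_square mult_ac)
  also have "\<dots> \<le> 16 * b ^ 2 * S12 b N"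
    using \<open>B * B \<le> S12 b N\<close> by simp
  finally show ?thesis .
qed

lemma square_le_mult_S21:
  assumes "b \<ge> 2" "4 * b ^ k \<le> N" "N < 4 * b ^ Suc k"
  shows "N ^ 2 \<le> 8 * b * S21 b N"
proof -
  define B where "B = b ^ k"
  have window: "coprime (digrev b n) b" if "B \<le> n" "n < 2 * B" for n
    using coprime_digrev_if_leading_digit_one[OF assms(1)] that unfolding B_def .
  have "4 * B \<le> N" "1 \<le> B"
    using assms(1,2) by (simp_all add: B_def)
  then have "{1..N - 2 * B} \<times> {B..<2 * B} \<subseteq> pairs_below N (\<lambda>a c. coprime (digrev b c) b)"
    by (auto simp: pairs_below_def window)
  from card_le_card_pairs_below[OF this] have "(N - 2 * B) * B \<le> S21 b N"
    by (simp add: S21_eq_card_pairs_below)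
  have "N ^ 2 \<le> (2 * (N - 2 * B)) * (4 * b * B)"
    unfolding power2_eq_square using assms(3) \<open>4 * B \<le> N\<close>
    by (intro mult_le_mono) (simp_all add: B_def mult_ac)
  also have "\<dots> = 8 * b * ((N - 2 * B) * B)"
    by (simp add: mult_ac)
  also have "\<dots> \<le> 8 * b * S21 b N"
    using \<open>(N - 2 * B) * B \<le> S21 b N\<close> by simp
  finally show ?thesis .
qed

lemma real_div_le_of_nat_if_le_mult:
  assumes "n \<le> m * s" "0 < m"
  shows "real n / real m \<le> real s"
  using assms by (simp add: divide_le_eq mult.commute flip: of_nat_mult)

lemma of_nat_le_real_div_if_mult_le:
  assumes "m * s \<le> n" "0 < m"
  shows "real s \<le> real n / real m"
  using assms by (simp add: le_divide_eq mult.commute flip: of_nat_mult)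

theorem lemma4p1:
  fixes b :: nat
  assumes "b \<ge> 2"
  shows "\<forall>\<^sub>F N in sequentially.
     real N ^ 2 / (16 * real b ^ 2) \<le> real (S12 b N) \<and> real (S12 b N) \<le> real N ^ 2 / 2 \<and>
     real N ^ 2 / (8 * real b) \<le> real (S21 b N) \<and> real (S21 b N) \<le> real N ^ 2 / 2"
proof (rule eventually_mono[OF eventually_ge_at_top[of 4]])
  fix N :: nat
  assume "4 \<le> N"
  then obtain k where "4 * b ^ k \<le> N" "N < 4 * b ^ Suc k"
    using ex_power_window[OF assms, of 4] by auto
  then have "N ^ 2 \<le> 16 * b ^ 2 * S12 b N" "N ^ 2 \<le> 8 * b * S21 b N"
    using square_le_mult_S12[OF assms] square_le_mult_S21[OF assms] by auto
  with assms have "real (N ^ 2) / real (16 * b ^ 2) \<le> real (S12 b N)"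
    "real (N ^ 2) / real (8 * b) \<le> real (S21 b N)"
    by (simp_all add: real_div_le_of_nat_if_le_mult del: of_nat_power of_nat_mult)
  moreover have "2 * S12 b N \<le> N ^ 2" "2 * S21 b N \<le> N ^ 2"
    unfolding S12_eq_card_pairs_below S21_eq_card_pairs_below by (rule card_pairs_below_le)+
  then have "real (S12 b N) \<le> real (N ^ 2) / real 2" "real (S21 b N) \<le> real (N ^ 2) / real 2"
    by (simp_all add: of_nat_le_real_div_if_mult_le del: of_nat_power of_nat_numeral)
  ultimately show "real N ^ 2 / (16 * real b ^ 2) \<le> real (S12 b N) \<and> real (S12 b N) \<le> real N ^ 2 / 2 \<and>
     real N ^ 2 / (8 * real b) \<le> real (S21 b N) \<and> real (S21 b N) \<le> real N ^ 2 / 2"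
    by simp
qed

end
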